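(* Let $c\in\mathbb{R}$ with $c\neq 1$, and let $f:\mathbb{R}\to\mathbb{R}$ be a twice differentiable function satisfying $(c^2-1)f''(z)+\sin f(z)=0$. Fix $\zeta\in\mathbb{C}\setminus\{0\}$ and define $$A=-\frac{i\left(4(1+c)\zeta^2-(c-1)\cos f(z)\right)}{8\zeta},\quad B=\frac{(c-1)\left(i\sin f(z)+2(c+1)\zeta f'(z)\right)}{8\zeta},\quad \tilde B=\frac{(c-1)\left(i\sin f(z)-2(c+1)\zeta f'(z)\right)}{8\zeta},$$ $$C=-\frac{i\zeta}{2}+\frac{i\cos f(z)}{8\zeta},\quad D=\frac{i\sin f(z)}{8\zeta}+\frac{(c-1)f'(z)}{4},\quad \tilde D=\frac{i\sin f(z)}{8\zeta}-\frac{(c-1)f'(z)}{4}.$$ Let $\chi(z,\tau)=(\chi_1(z,\tau),\chi_2(z,\tau))^T$ be any simultaneous solution of $$\chi_z=\begin{pmatrix} C & D\\ \tilde D & -C\end{pmatrix}\chi,\qquad \chi_\tau=\begin{pmatrix} A & B\\ \tilde B & -A\end{pmatrix}\chi.$$ Then $w(z,\tau)=\chi_1(z,\tau)^2+\chi_2(z,\tau)^2$ satisfies $$(c^2-1)w_{zz}-2c\,w_{z\tau}+w_{\tau\tau}+\cos\left(f(z)\right)w=0.$$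
   Context: This is the Lax pair of the sine-Gordon equation $u_{tt}-u_{xx}+\sin u=0$ written in the traveling frame $z=x-ct$, $\tau=t$ and evaluated at the stationary solution $u=f(z)$; the equation for $w$ is the linearization of the traveling-frame sine-Gordon equation $(c^2-1)v_{zz}-2cv_{z\tau}+v_{\tau\tau}+\sin v=0$ about $v=f(z)$. *)

theory Defs
  imports "HOL-Analysis.Analysis"
begin

text \<open>Lax-pair coefficients; arguments: speed c, spectral parameter zeta,
  value u = f(z) and slope p = f'(z).\<close>

definition LA :: "real \<Rightarrow> complex \<Rightarrow> real \<Rightarrow> real \<Rightarrow> complex" where
  "LA c \<zeta> u p = - (\<i> * (4 * (1 + of_real c) * \<zeta>\<^sup>2 - (of_real c - 1) * of_real (cos u))) / (8 * \<zeta>)"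

definition LB :: "real \<Rightarrow> complex \<Rightarrow> real \<Rightarrow> real \<Rightarrow> complex" where
  "LB c \<zeta> u p = (of_real c - 1) * (\<i> * of_real (sin u) + 2 * (of_real c + 1) * \<zeta> * of_real p) / (8 * \<zeta>)"

definition LBt :: "real \<Rightarrow> complex \<Rightarrow> real \<Rightarrow> real \<Rightarrow> complex" where
  "LBt c \<zeta> u p = (of_real c - 1) * (\<i> * of_real (sin u) - 2 * (of_real c + 1) * \<zeta> * of_real p) / (8 * \<zeta>)"

definition LC :: "real \<Rightarrow> complex \<Rightarrow> real \<Rightarrow> real \<Rightarrow> complex" where
  "LC c \<zeta> u p = - (\<i> * \<zeta>) / 2 + \<i> * of_real (cos u) / (8 * \<zeta>)"

definition LD :: "real \<Rightarrow> complex \<Rightarrow> real \<Rightarrow> real \<Rightarrow> complex" where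
  "LD c \<zeta> u p = \<i> * of_real (sin u) / (8 * \<zeta>) + (of_real c - 1) * of_real p / 4"

definition LDt :: "real \<Rightarrow> complex \<Rightarrow> real \<Rightarrow> real \<Rightarrow> complex" where
  "LDt c \<zeta> u p = \<i> * of_real (sin u) / (8 * \<zeta>) - (of_real c - 1) * of_real p / 4"

end

theory Submission
  imports Defs
begin

text \<open>A binary form a x^2 + b y^2 + e x y in a solution (x, y) of a traceless 2-by-2 linear system
  differentiates to another binary form. Hence w and all its first and second derivatives are
  binary forms in the components of \<chi>, and the linearized operator applied to w is a binary form
  whose three coefficients vanish by a rational identity in \<zeta>.\<close>

definition binary_form :: "'a::comm_ring_1 \<Rightarrow> 'a \<Rightarrow> 'a \<Rightarrow> 'a \<Rightarrow> 'a \<Rightarrow> 'a" where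
  "binary_form a b e x y = a * x\<^sup>2 + b * y\<^sup>2 + e * x * y"

lemma has_vector_derivative_binary_form:
  fixes a b e x y :: "real \<Rightarrow> 'a::real_normed_field"
  assumes "(a has_vector_derivative a') (at t)" "(b has_vector_derivative b') (at t)"
    "(e has_vector_derivative e') (at t)"
    and "(x has_vector_derivative p * x t + q * y t) (at t)"
    and "(y has_vector_derivative r * x t - p * y t) (at t)"
  shows "((\<lambda>s. binary_form (a s) (b s) (e s) (x s) (y s)) has_vector_derivative
      binary_form (a' + 2 * a t * p + e t * r) (b' - 2 * b t * p + e t * q)
        (e' + 2 * a t * q + 2 * b t * r) (x t) (y t)) (at t)"
proof -
  have "((\<lambda>s. a s * (x s * x s) + b s * (y s * y s) + e s * x s * y s) has_vector_derivative
      a t * (x t * (p * x t + q * y t) + (p * x t + q * y t) * x t) + a' * (x t * x t)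
      + (b t * (y t * (r * x t - p * y t) + (r * x t - p * y t) * y t) + b' * (y t * y t))
      + (e t * x t * (r * x t - p * y t) + (e t * (p * x t + q * y t) + e' * x t) * y t)) (at t)"
    by (intro has_vector_derivative_add has_vector_derivative_mult assms)
  then show ?thesis
    unfolding binary_form_def power2_eq_square
    by (rule has_vector_derivative_eq_rhs) (simp add: algebra_simps)
qed

corollary has_vector_derivative_binary_form_const:
  fixes x y :: "real \<Rightarrow> 'a::real_normed_field"
  assumes "(x has_vector_derivative p * x t + q * y t) (at t)"
    and "(y has_vector_derivative r * x t - p * y t) (at t)"
  shows "((\<lambda>s. binary_form a b e (x s) (y s)) has_vector_derivative
      binary_form (2 * a * p + e * r) (- 2 * b * p + e * q) (2 * a * q + 2 * b * r) (x t) (y t)) (at t)"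
  using has_vector_derivative_binary_form[OF has_vector_derivative_const has_vector_derivative_const
      has_vector_derivative_const assms, of a b e]
  by simp

locale traceless_lax_pair =
  fixes x y :: "real \<Rightarrow> real \<Rightarrow> 'a::real_normed_field"
    and P Q R U V W :: "real \<Rightarrow> 'a"
  assumes x_z: "\<And>z t. ((\<lambda>s. x s t) has_vector_derivative P z * x z t + Q z * y z t) (at z)"
    and y_z: "\<And>z t. ((\<lambda>s. y s t) has_vector_derivative R z * x z t - P z * y z t) (at z)"
    and x_t: "\<And>z t. ((\<lambda>t. x z t) has_vector_derivative U z * x z t + V z * y z t) (at t)"
    and y_t: "\<And>z t. ((\<lambda>t. y z t) has_vector_derivative W z * x z t - U z * y z t) (at t)"
begin

definition sum_squares_dz :: "real \<Rightarrow> real \<Rightarrow> 'a" where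
  "sum_squares_dz s t = binary_form (2 * P s) (- 2 * P s) (2 * (Q s + R s)) (x s t) (y s t)"

definition sum_squares_dt :: "real \<Rightarrow> real \<Rightarrow> 'a" where
  "sum_squares_dt s t = binary_form (2 * U s) (- 2 * U s) (2 * (V s + W s)) (x s t) (y s t)"

lemma sum_squares_eq_binary_form: "(x s t)\<^sup>2 + (y s t)\<^sup>2 = binary_form 1 1 0 (x s t) (y s t)"
  by (simp add: binary_form_def)

lemma has_vector_derivative_sum_squares_z:
  "((\<lambda>s. (x s t)\<^sup>2 + (y s t)\<^sup>2) has_vector_derivative sum_squares_dz z t) (at z)"
  unfolding sum_squares_eq_binary_form sum_squares_dz_def
  by (rule has_vector_derivative_eq_rhs[OF has_vector_derivative_binary_form_const[OF x_z y_z]])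
    (simp add: algebra_simps)

lemma has_vector_derivative_sum_squares_t:
  "((\<lambda>t. (x z t)\<^sup>2 + (y z t)\<^sup>2) has_vector_derivative sum_squares_dt z t) (at t)"
  unfolding sum_squares_eq_binary_form sum_squares_dt_def
  by (rule has_vector_derivative_eq_rhs[OF has_vector_derivative_binary_form_const[OF x_t y_t]])
    (simp add: algebra_simps)

lemma has_vector_derivative_sum_squares_dz_z:
  assumes "(P has_vector_derivative P') (at z)" and "((\<lambda>s. Q s + R s) has_vector_derivative E') (at z)"
  shows "((\<lambda>s. sum_squares_dz s t) has_vector_derivative
      binary_form (2 * P' + 4 * (P z)\<^sup>2 + 2 * (Q z + R z) * R z)
        (- 2 * P' + 4 * (P z)\<^sup>2 + 2 * (Q z + R z) * Q z) (2 * E' + 4 * P z * Q z - 4 * P z * R z)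
        (x z t) (y z t)) (at z)"
  unfolding sum_squares_dz_def
  by (rule has_vector_derivative_eq_rhs[OF has_vector_derivative_binary_form[OF
        has_vector_derivative_mult_right[OF assms(1)] has_vector_derivative_mult_right[OF assms(1)]
        has_vector_derivative_mult_right[OF assms(2)] x_z y_z]])
    (simp add: algebra_simps power2_eq_square)

lemma has_vector_derivative_sum_squares_dz_t:
  "((\<lambda>t. sum_squares_dz z t) has_vector_derivative
      binary_form (4 * P z * U z + 2 * (Q z + R z) * W z) (4 * P z * U z + 2 * (Q z + R z) * V z)
        (4 * P z * V z - 4 * P z * W z) (x z t) (y z t)) (at t)"
  unfolding sum_squares_dz_def
  by (rule has_vector_derivative_eq_rhs[OF has_vector_derivative_binary_form_const[OF x_t y_t]])
    (simp add: algebra_simps)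

lemma has_vector_derivative_sum_squares_dt_t:
  "((\<lambda>t. sum_squares_dt z t) has_vector_derivative
      binary_form (4 * (U z)\<^sup>2 + 2 * (V z + W z) * W z) (4 * (U z)\<^sup>2 + 2 * (V z + W z) * V z)
        (4 * U z * V z - 4 * U z * W z) (x z t) (y z t)) (at t)"
  unfolding sum_squares_dt_def
  by (rule has_vector_derivative_eq_rhs[OF has_vector_derivative_binary_form_const[OF x_t y_t]])
    (simp add: algebra_simps power2_eq_square)

end

lemma has_vector_derivative_LC:
  assumes "(u has_real_derivative u') (at z)"
  shows "((\<lambda>s. LC c \<zeta> (u s) (p s)) has_vector_derivative
      \<i> * of_real (- sin (u z) * u') / (8 * \<zeta>)) (at z)"
proof -
  have "((\<lambda>s. of_real (cos (u s)) :: complex) has_vector_derivative of_real (- sin (u z) * u')) (at z)"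
    by (intro has_vector_derivative_of_real DERIV_chain2[OF DERIV_cos assms])
  then have "((\<lambda>s. - (\<i> * \<zeta>) / 2 + \<i> * of_real (cos (u s)) / (8 * \<zeta>)) has_vector_derivative
      0 + \<i> * of_real (- sin (u z) * u') / (8 * \<zeta>)) (at z)"
    by (intro has_vector_derivative_add has_vector_derivative_const
        has_vector_derivative_divide has_vector_derivative_mult_right)
  then show ?thesis by (simp add: LC_def)
qed

lemma LD_plus_LDt: "LD c \<zeta> u p + LDt c \<zeta> u p = \<i> * of_real (sin u) / (4 * \<zeta>)"
  by (simp add: LD_def LDt_def field_simps)

lemma has_vector_derivative_LD_plus_LDt:
  assumes "(u has_real_derivative u') (at z)"
  shows "((\<lambda>s. LD c \<zeta> (u s) (p s) + LDt c \<zeta> (u s) (p s)) has_vector_derivative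
      \<i> * of_real (cos (u z) * u') / (4 * \<zeta>)) (at z)"
  unfolding LD_plus_LDt
  by (intro has_vector_derivative_divide has_vector_derivative_mult_right
      has_vector_derivative_of_real DERIV_chain2[OF DERIV_sin assms])

lemma lax_coefficient_identity:
  fixes c u p :: real and \<zeta> x y :: complex
  assumes "\<zeta> \<noteq> 0"
  defines "A \<equiv> LA c \<zeta> u p" and "B \<equiv> LB c \<zeta> u p" and "Bt \<equiv> LBt c \<zeta> u p"
    and "C \<equiv> LC c \<zeta> u p" and "D \<equiv> LD c \<zeta> u p" and "Dt \<equiv> LDt c \<zeta> u p"
    and "C' \<equiv> \<i> * of_real (- sin u * p) / (8 * \<zeta>)"
    and "E' \<equiv> \<i> * of_real (cos u * p) / (4 * \<zeta>)"
  shows "of_real (c\<^sup>2 - 1) * binary_form (2 * C' + 4 * C\<^sup>2 + 2 * (D + Dt) * Dt)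
        (- 2 * C' + 4 * C\<^sup>2 + 2 * (D + Dt) * D) (2 * E' + 4 * C * D - 4 * C * Dt) x y
      - 2 * of_real c * binary_form (4 * C * A + 2 * (D + Dt) * Bt)
        (4 * C * A + 2 * (D + Dt) * B) (4 * C * B - 4 * C * Bt) x y
      + binary_form (4 * A\<^sup>2 + 2 * (B + Bt) * Bt) (4 * A\<^sup>2 + 2 * (B + Bt) * B)
        (4 * A * B - 4 * A * Bt) x y
      + of_real (cos u) * binary_form 1 1 0 x y = 0"
proof -
  have "of_real (c\<^sup>2 - 1) * (2 * C' + 4 * C\<^sup>2 + 2 * (D + Dt) * Dt)
      - 2 * of_real c * (4 * C * A + 2 * (D + Dt) * Bt) + (4 * A\<^sup>2 + 2 * (B + Bt) * Bt)
      + of_real (cos u) = 0"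
   and "of_real (c\<^sup>2 - 1) * (- 2 * C' + 4 * C\<^sup>2 + 2 * (D + Dt) * D)
      - 2 * of_real c * (4 * C * A + 2 * (D + Dt) * B) + (4 * A\<^sup>2 + 2 * (B + Bt) * B)
      + of_real (cos u) = 0"
   and "of_real (c\<^sup>2 - 1) * (2 * E' + 4 * C * D - 4 * C * Dt)
      - 2 * of_real c * (4 * C * B - 4 * C * Bt) + (4 * A * B - 4 * A * Bt) = 0"
    using assms(1) unfolding assms(2-) LA_def LB_def LBt_def LC_def LD_def LDt_def
    by (simp_all add: field_simps power2_eq_square)
  then show ?thesis
    unfolding binary_form_def by algebra
qed

theorem theorem1:
  fixes c :: real and f f' f'' :: "real \<Rightarrow> real" and \<zeta> :: complex
    and \<chi>1 \<chi>2 :: "real \<Rightarrow> real \<Rightarrow> complex"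
  assumes hc: "c \<noteq> 1"
    and hf: "\<And>z. (f has_real_derivative f' z) (at z)"
    and hf': "\<And>z. (f' has_real_derivative f'' z) (at z)"
    and hode: "\<And>z. (c\<^sup>2 - 1) * f'' z + sin (f z) = 0"
    and h\<zeta>: "\<zeta> \<noteq> 0"
    and hz1: "\<And>z \<tau>. ((\<lambda>s. \<chi>1 s \<tau>) has_vector_derivative
        (LC c \<zeta> (f z) (f' z) * \<chi>1 z \<tau> + LD c \<zeta> (f z) (f' z) * \<chi>2 z \<tau>)) (at z)"
    and hz2: "\<And>z \<tau>. ((\<lambda>s. \<chi>2 s \<tau>) has_vector_derivative
        (LDt c \<zeta> (f z) (f' z) * \<chi>1 z \<tau> - LC c \<zeta> (f z) (f' z) * \<chi>2 z \<tau>)) (at z)"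
    and ht1: "\<And>z \<tau>. ((\<lambda>t. \<chi>1 z t) has_vector_derivative
        (LA c \<zeta> (f z) (f' z) * \<chi>1 z \<tau> + LB c \<zeta> (f z) (f' z) * \<chi>2 z \<tau>)) (at \<tau>)"
    and ht2: "\<And>z \<tau>. ((\<lambda>t. \<chi>2 z t) has_vector_derivative
        (LBt c \<zeta> (f z) (f' z) * \<chi>1 z \<tau> - LA c \<zeta> (f z) (f' z) * \<chi>2 z \<tau>)) (at \<tau>)"
  defines "w \<equiv> (\<lambda>z \<tau>. (\<chi>1 z \<tau>)\<^sup>2 + (\<chi>2 z \<tau>)\<^sup>2)"
  defines "w_z \<equiv> (\<lambda>z \<tau>. vector_derivative (\<lambda>s. w s \<tau>) (at z))"
  defines "w_t \<equiv> (\<lambda>z \<tau>. vector_derivative (\<lambda>t. w z t) (at \<tau>))"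
  defines "w_zz \<equiv> (\<lambda>z \<tau>. vector_derivative (\<lambda>s. w_z s \<tau>) (at z))"
  defines "w_zt \<equiv> (\<lambda>z \<tau>. vector_derivative (\<lambda>t. w_z z t) (at \<tau>))"
  defines "w_tt \<equiv> (\<lambda>z \<tau>. vector_derivative (\<lambda>t. w_t z t) (at \<tau>))"
  shows "\<forall>z \<tau>. (\<lambda>s. w s \<tau>) differentiable (at z) \<and> (\<lambda>t. w z t) differentiable (at \<tau>)
      \<and> (\<lambda>s. w_z s \<tau>) differentiable (at z) \<and> (\<lambda>t. w_z z t) differentiable (at \<tau>)
      \<and> (\<lambda>t. w_t z t) differentiable (at \<tau>)
      \<and> of_real (c\<^sup>2 - 1) * w_zz z \<tau> - 2 * of_real c * w_zt z \<tau> + w_tt z \<tau>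
          + of_real (cos (f z)) * w z \<tau> = 0"
proof -
  define A where "A s = LA c \<zeta> (f s) (f' s)" for s
  define B where "B s = LB c \<zeta> (f s) (f' s)" for s
  define Bt where "Bt s = LBt c \<zeta> (f s) (f' s)" for s
  define C where "C s = LC c \<zeta> (f s) (f' s)" for s
  define D where "D s = LD c \<zeta> (f s) (f' s)" for s
  define Dt where "Dt s = LDt c \<zeta> (f s) (f' s)" for s
  interpret traceless_lax_pair \<chi>1 \<chi>2 C D Dt A B Bt
    using hz1 hz2 ht1 ht2 unfolding A_def B_def Bt_def C_def D_def Dt_def by unfold_locales
  have w_z_eq: "w_z = sum_squares_dz" and w_t_eq: "w_t = sum_squares_dt"
    unfolding w_z_def w_t_def w_def
    by (auto intro!: vector_derivative_at has_vector_derivative_sum_squares_z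
        has_vector_derivative_sum_squares_t)
  show ?thesis
  proof (intro allI)
    fix z \<tau>
    have dC: "(C has_vector_derivative \<i> * of_real (- sin (f z) * f' z) / (8 * \<zeta>)) (at z)"
      unfolding C_def[abs_def] by (rule has_vector_derivative_LC[OF hf])
    have dE: "((\<lambda>s. D s + Dt s) has_vector_derivative \<i> * of_real (cos (f z) * f' z) / (4 * \<zeta>)) (at z)"
      unfolding D_def Dt_def by (rule has_vector_derivative_LD_plus_LDt[OF hf])
    note w_zz = has_vector_derivative_sum_squares_dz_z[OF dC dE, of \<tau>]
    note w_zt = has_vector_derivative_sum_squares_dz_t[of z \<tau>]
    note w_tt = has_vector_derivative_sum_squares_dt_t[of z \<tau>]
    have "of_real (c\<^sup>2 - 1) * w_zz z \<tau> - 2 * of_real c * w_zt z \<tau> + w_tt z \<tau>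
        + of_real (cos (f z)) * w z \<tau> = 0"
      unfolding w_zz_def w_zt_def w_tt_def w_z_eq w_t_eq w_def sum_squares_eq_binary_form
        vector_derivative_at[OF w_zz] vector_derivative_at[OF w_zt] vector_derivative_at[OF w_tt]
      using lax_coefficient_identity[OF h\<zeta>, of c "f z" "f' z",
          folded A_def B_def Bt_def C_def D_def Dt_def]
      by simp
    then show "(\<lambda>s. w s \<tau>) differentiable (at z) \<and> (\<lambda>t. w z t) differentiable (at \<tau>)
        \<and> (\<lambda>s. w_z s \<tau>) differentiable (at z) \<and> (\<lambda>t. w_z z t) differentiable (at \<tau>)
        \<and> (\<lambda>t. w_t z t) differentiable (at \<tau>)
        \<and> of_real (c\<^sup>2 - 1) * w_zz z \<tau> - 2 * of_real c * w_zt z \<tau> + w_tt z \<tau>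
            + of_real (cos (f z)) * w z \<tau> = 0"
      unfolding w_z_eq w_t_eq w_def
      using has_vector_derivative_sum_squares_z has_vector_derivative_sum_squares_t w_zz w_zt w_tt
      by (blast intro: differentiableI_vector)
  qed
qed

end
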